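(* Consider BALM applied to $\min_{x\in\mathcal{X}} f(x)$ s.t. $Ax=b$ (with $\Lambda=\mathbb{R}^m$) or s.t. $Ax\le b$ (with $\Lambda=\mathbb{R}^m_+$), with parameters $\eta_k>0$, and define for $T\ge1$ $$\tilde x_T=\frac{\sum_{k=0}^{T-1}\eta_k x_{k+1}}{\sum_{k=0}^{T-1}\eta_k},\qquad \tilde\lambda_T=\frac{\sum_{k=0}^{T-1}\eta_k \lambda_{k+1}}{\sum_{k=0}^{T-1}\eta_k}.$$ Then for all $x\in\mathcal{X}$, $\lambda\in\Lambda$, $$L(\tilde x_T,\lambda)-L(x,\tilde\lambda_T)\le\frac{D_h(\lambda,\lambda_0)}{\sum_{k=0}^{T-1}\eta_k},$$ and, if $x^*$ is an optimal solution of the primal problem, for all $\lambda\in\Lambda$, $$f(\tilde x_T)-f(x^* )+\lambda^\top(A\tilde x_T-b)\le\frac{D_h(\lambda,\lambda_0)}{\sum_{k=0}^{T-1}\eta_k}.$$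
   Context: $f$ is closed, convex (and coercive), $\mathcal{X}\subseteq\mathbb{R}^n$ closed convex, $A\in\mathbb{R}^{m\times n}$, $b\in\mathbb{R}^m$, $L(x,\lambda)=f(x)+\lambda^\top(Ax-b)$. $h:\Lambda\to\mathbb{R}$ is proper, coercive, strictly convex and continuously differentiable on $\Lambda$; $D_h(\lambda,\tilde\lambda)=h(\lambda)-h(\tilde\lambda)-\nabla h(\tilde\lambda)^\top(\lambda-\tilde\lambda)$. BALM: given $\lambda_0\in\Lambda$, for $k\ge0$, $(x_{k+1},\lambda_{k+1})\in\mathcal{X}\times\Lambda$ is a saddle point on $\mathcal{X}\times\Lambda$ (min in $x$, max in $\lambda$) of $L(x,\lambda)-\frac1{\eta_k}D_h(\lambda,\lambda_k)$ (assumed to exist). *)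

theory Defs
  imports "HOL-Analysis.Analysis"
begin

definition strict_convex_on_set :: "'a::real_vector set \<Rightarrow> ('a \<Rightarrow> real) \<Rightarrow> bool" where
  "strict_convex_on_set S g \<longleftrightarrow> convex S \<and>
     (\<forall>x\<in>S. \<forall>y\<in>S. \<forall>u::real. x \<noteq> y \<and> 0 < u \<and> u < 1 \<longrightarrow>
        g ((1 - u) *\<^sub>R x + u *\<^sub>R y) < (1 - u) * g x + u * g y)"

definition coercive_on :: "'a::real_normed_vector set \<Rightarrow> ('a \<Rightarrow> real) \<Rightarrow> bool" where
  "coercive_on S g \<longleftrightarrow> (\<forall>M. \<exists>R. \<forall>x\<in>S. R \<le> norm x \<longrightarrow> M \<le> g x)"

definition closed_fun :: "('a::real_normed_vector \<Rightarrow> real) \<Rightarrow> bool" where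
  "closed_fun g \<longleftrightarrow> closed {(x, t). g x \<le> t}"

definition lagr :: "(real^'n \<Rightarrow> real) \<Rightarrow> real^'n^'m \<Rightarrow> real^'m \<Rightarrow> real^'n \<Rightarrow> real^'m \<Rightarrow> real" where
  "lagr f A b x l = f x + l \<bullet> (A *v x - b)"

definition bregman :: "('a::real_inner \<Rightarrow> real) \<Rightarrow> ('a \<Rightarrow> 'a) \<Rightarrow> 'a \<Rightarrow> 'a \<Rightarrow> real" where
  "bregman h gh l l' = h l - h l' - gh l' \<bullet> (l - l')"

text \<open>Dual domain: eqc = True means constraints A x = b, Lambda = R^m;
  eqc = False means constraints A x <= b, Lambda = nonnegative orthant.\<close>
definition dual_dom :: "bool \<Rightarrow> (real^'m) set" where
  "dual_dom eqc = (if eqc then UNIV else {l. \<forall>i. 0 \<le> l $ i})"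

definition feasible :: "bool \<Rightarrow> real^'n^'m \<Rightarrow> real^'m \<Rightarrow> real^'n \<Rightarrow> bool" where
  "feasible eqc A b x \<longleftrightarrow> (if eqc then A *v x = b else (\<forall>i. (A *v x) $ i \<le> b $ i))"

definition saddle_point :: "('a \<Rightarrow> 'b \<Rightarrow> real) \<Rightarrow> 'a set \<Rightarrow> 'b set \<Rightarrow> 'a \<Rightarrow> 'b \<Rightarrow> bool" where
  "saddle_point Phi X Lam xs ls \<longleftrightarrow> xs \<in> X \<and> ls \<in> Lam \<and>
     (\<forall>x\<in>X. \<forall>l\<in>Lam. Phi xs l \<le> Phi xs ls \<and> Phi xs ls \<le> Phi x ls)"

end

theory Submission
  imports Defs "HOL-Analysis.Analysis"
begin

text \<open>
  Each BALM step is a mirror-ascent step in the dual: the first-order optimality condition of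
  the maximisation in \<open>\<lambda>\<close>, combined with the three-point identity for the Bregman
  divergence, gives
  \<open>\<eta>\<^sub>k (L(x\<^sub>k\<^sub>+\<^sub>1, \<lambda>) - L(x, \<lambda>\<^sub>k\<^sub>+\<^sub>1)) \<le> D\<^sub>h(\<lambda>, \<lambda>\<^sub>k) - D\<^sub>h(\<lambda>, \<lambda>\<^sub>k\<^sub>+\<^sub>1)\<close>,
  while minimality in \<open>x\<close> bounds \<open>L(x\<^sub>k\<^sub>+\<^sub>1, \<lambda>\<^sub>k\<^sub>+\<^sub>1)\<close> by \<open>L(x, \<lambda>\<^sub>k\<^sub>+\<^sub>1)\<close>.
  Summing telescopes the right-hand side, and since \<open>L\<close> is convex in \<open>x\<close> and affine in
  \<open>\<lambda>\<close>, Jensen's inequality passes the bound to the ergodic averages. For a feasible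
  \<open>x\<^sup>*\<close> the averaged multiplier \<open>\<mu>\<close> lies in \<open>\<Lambda>\<close>, so \<open>\<mu> \<bullet> (Ax\<^sup>* - b) \<le> 0\<close>, which yields the
  second bound.
\<close>

lemma strict_convex_on_set_imp_convex_on:
  assumes "strict_convex_on_set S g"
  shows "convex_on S g"
proof
  show "convex S" using assms by (simp add: strict_convex_on_set_def)
next
  fix t :: real and x y assume "0 < t" "t < 1" "x \<in> S" "y \<in> S"
  then show "g ((1 - t) *\<^sub>R x + t *\<^sub>R y) \<le> (1 - t) * g x + t * g y"
    using assms unfolding strict_convex_on_set_def
    by (cases "x = y") (auto simp: algebra_simps less_imp_le)
qed

lemma has_derivative_segment_quotient:
  fixes \<psi> :: "'a::real_normed_vector \<Rightarrow> real"
  assumes "convex D" "c \<in> D" "a \<in> D" and \<psi>: "(\<psi> has_derivative G) (at c within D)"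
  shows "((\<lambda>t. (\<psi> (c + t *\<^sub>R (a - c)) - \<psi> c) / t) \<longlongrightarrow> G (a - c)) (at 0 within {0..1})"
proof -
  let ?seg = "\<lambda>t::real. c + t *\<^sub>R (a - c)"
  have "?seg ` {0..1} \<subseteq> D"
  proof
    fix z assume "z \<in> ?seg ` {0..1}"
    then obtain t where "0 \<le> t" "t \<le> 1" "z = (1 - t) *\<^sub>R c + t *\<^sub>R a"
      by (auto simp: algebra_simps)
    then show "z \<in> D" using assms(1-3) by (simp add: convex_alt)
  qed
  then have "(\<psi> has_derivative G) (at (?seg 0) within ?seg ` {0..1})"
    using \<psi> by (auto intro: has_derivative_subset)
  moreover have "(?seg has_derivative (\<lambda>t. t *\<^sub>R (a - c))) (at 0 within {0..1})"
    by (auto intro!: derivative_eq_intros)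
  ultimately have "((\<lambda>t. \<psi> (?seg t)) has_derivative (\<lambda>t. G (t *\<^sub>R (a - c)))) (at 0 within {0..1})"
    by (rule has_derivative_in_compose[rotated])
  moreover have "(\<lambda>t. G (t *\<^sub>R (a - c))) = (*) (G (a - c))"
    using linear_scale[OF has_derivative_linear[OF \<psi>]] by (auto simp: mult.commute)
  ultimately have "((\<lambda>t. \<psi> (?seg t)) has_field_derivative G (a - c)) (at 0 within {0..1})"
    by (simp add: has_field_derivative_def)
  then show ?thesis by (simp add: has_field_derivative_iff)
qed

lemma at_0_within_unit_interval_nontrivial: "at (0::real) within {0..1} \<noteq> bot"
  by (simp add: trivial_limit_within islimpt_Icc)

lemma convex_on_has_derivative_le:
  assumes h: "convex_on D h" and "c \<in> D" "a \<in> D"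
    and "(h has_derivative G) (at c within D)"
  shows "G (a - c) \<le> h a - h c"
proof (rule tendsto_upperbound[OF has_derivative_segment_quotient _ at_0_within_unit_interval_nontrivial])
  show "\<forall>\<^sub>F t in at 0 within {0..1}. (h (c + t *\<^sub>R (a - c)) - h c) / t \<le> h a - h c"
    unfolding eventually_at_filter
  proof (intro always_eventually allI impI)
    fix t :: real assume t: "t \<noteq> 0" "t \<in> {0..1}"
    have "h (c + t *\<^sub>R (a - c)) = h ((1 - t) *\<^sub>R c + t *\<^sub>R a)" by (simp add: algebra_simps)
    also have "\<dots> \<le> (1 - t) * h c + t * h a"
      using convex_onD[OF h] t \<open>c \<in> D\<close> \<open>a \<in> D\<close> by simp
    finally have "h (c + t *\<^sub>R (a - c)) - h c \<le> t * (h a - h c)"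
      by (simp add: algebra_simps)
    then show "(h (c + t *\<^sub>R (a - c)) - h c) / t \<le> h a - h c"
      using t by (simp add: divide_le_eq mult.commute)
  qed
qed (use assms convex_on_imp_convex in auto)

lemma min_on_convex_derivative_nonneg:
  fixes \<psi> :: "'a::real_normed_vector \<Rightarrow> real"
  assumes "convex D" "c \<in> D" "a \<in> D" "(\<psi> has_derivative G) (at c within D)"
    and min: "\<And>z. z \<in> D \<Longrightarrow> \<psi> c \<le> \<psi> z"
  shows "0 \<le> G (a - c)"
proof (rule tendsto_lowerbound[OF has_derivative_segment_quotient[OF assms(1-4)] _ at_0_within_unit_interval_nontrivial])
  show "\<forall>\<^sub>F t in at 0 within {0..1}. 0 \<le> (\<psi> (c + t *\<^sub>R (a - c)) - \<psi> c) / t"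
    unfolding eventually_at_filter
  proof (intro always_eventually allI impI)
    fix t :: real assume t: "t \<noteq> 0" "t \<in> {0..1}"
    have "c + t *\<^sub>R (a - c) = (1 - t) *\<^sub>R c + t *\<^sub>R a" by (simp add: algebra_simps)
    then have "c + t *\<^sub>R (a - c) \<in> D" using assms(1-3) t by (simp add: convex_alt)
    then show "0 \<le> (\<psi> (c + t *\<^sub>R (a - c)) - \<psi> c) / t" using min t by simp
  qed
qed

lemma bregman_nonneg:
  assumes "convex_on D h" "a \<in> D" "c \<in> D"
    and "(h has_derivative (\<lambda>v. gh c \<bullet> v)) (at c within D)"
  shows "0 \<le> bregman h gh a c"
  using convex_on_has_derivative_le[OF assms(1,3,2,4)] by (simp add: bregman_def)

lemma bregman_three_point:
  "bregman h gh l a - bregman h gh l c - bregman h gh c a = (gh c - gh a) \<bullet> (l - c)"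
  by (simp add: bregman_def algebra_simps)

lemma bregman_saddle_step:
  assumes D: "convex D" "convex_on D h"
    and grad: "\<And>l. l \<in> D \<Longrightarrow> (h has_derivative (\<lambda>v. gh l \<bullet> v)) (at l within D)"
    and "lk \<in> D" "0 < \<eta>"
    and sp: "saddle_point (\<lambda>y l. lagr f A b y l - bregman h gh l lk / \<eta>) X D x' l'"
    and "y \<in> X" "l \<in> D"
  shows "\<eta> * (lagr f A b x' l - lagr f A b y l') \<le> bregman h gh l lk - bregman h gh l l'"
proof -
  define r where "r = A *v x' - b"
  have "l' \<in> D" using sp by (simp add: saddle_point_def)
  have primal: "lagr f A b x' l' \<le> lagr f A b y l'"
    using sp \<open>y \<in> X\<close> by (auto simp: saddle_point_def)
  define \<psi> where "\<psi> z = bregman h gh z lk / \<eta> - lagr f A b x' z" for z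
  have "\<psi> l' \<le> \<psi> z" if "z \<in> D" for z
  proof -
    have "x' \<in> X" using sp by (simp add: saddle_point_def)
    then have "lagr f A b x' z - bregman h gh z lk / \<eta> \<le> lagr f A b x' l' - bregman h gh l' lk / \<eta>"
      using sp that by (simp add: saddle_point_def)
    then show ?thesis by (simp add: \<psi>_def)
  qed
  moreover have "(\<psi> has_derivative (\<lambda>v. (gh l' - gh lk) \<bullet> v / \<eta> - r \<bullet> v)) (at l' within D)"
    unfolding \<psi>_def bregman_def lagr_def r_def
    using \<open>0 < \<eta>\<close>
    by (auto intro!: derivative_eq_intros grad[OF \<open>l' \<in> D\<close>]
        simp: inner_diff_right inner_commute diff_divide_distrib)
  ultimately have "0 \<le> (gh l' - gh lk) \<bullet> (l - l') / \<eta> - r \<bullet> (l - l')"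
    using min_on_convex_derivative_nonneg[OF D(1) \<open>l' \<in> D\<close> \<open>l \<in> D\<close>] by blast
  then have first_order: "\<eta> * (r \<bullet> (l - l')) \<le> (gh l' - gh lk) \<bullet> (l - l')"
    using \<open>0 < \<eta>\<close> by (simp add: field_simps)
  have "\<eta> * (lagr f A b x' l - lagr f A b y l') \<le> \<eta> * (lagr f A b x' l - lagr f A b x' l')"
    using primal \<open>0 < \<eta>\<close> by simp
  also have "\<dots> = \<eta> * (r \<bullet> (l - l'))"
    by (simp add: lagr_def r_def algebra_simps inner_commute)
  also have "\<dots> \<le> bregman h gh l lk - bregman h gh l l' - bregman h gh l' lk"
    using first_order bregman_three_point[of h gh l lk l'] by simp
  also have "\<dots> \<le> bregman h gh l lk - bregman h gh l l'"
    using bregman_nonneg[where gh = gh, OF D(2) \<open>l' \<in> D\<close> \<open>lk \<in> D\<close> grad[OF \<open>lk \<in> D\<close>]] by simp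
  finally show ?thesis .
qed

lemma dual_dom_inner_residual_nonpos:
  assumes "l \<in> dual_dom eqc" "feasible eqc A b y"
  shows "l \<bullet> (A *v y - b) \<le> 0"
proof (cases eqc)
  case False
  then have "l $ i * (A *v y - b) $ i \<le> 0" for i
    using assms by (auto simp: dual_dom_def feasible_def mult_nonneg_nonpos)
  then show ?thesis by (simp add: inner_vec_def sum_nonpos)
qed (use assms in \<open>simp add: feasible_def\<close>)

definition weighted_mean :: "('i \<Rightarrow> real) \<Rightarrow> 'i set \<Rightarrow> ('i \<Rightarrow> 'a::real_vector) \<Rightarrow> 'a" where
  "weighted_mean w I z = (\<Sum>i\<in>I. w i *\<^sub>R z i) /\<^sub>R (\<Sum>i\<in>I. w i)"

lemma weighted_mean_normalized:
  "weighted_mean w I z = (\<Sum>i\<in>I. (w i / sum w I) *\<^sub>R z i)"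
  by (simp add: weighted_mean_def scaleR_sum_right divide_inverse_commute)

lemma weighted_mean_in_convex:
  assumes "convex C" "\<And>i. i \<in> I \<Longrightarrow> 0 \<le> w i" "0 < sum w I" "\<And>i. i \<in> I \<Longrightarrow> z i \<in> C"
  shows "weighted_mean w I z \<in> C"
  unfolding weighted_mean_normalized
proof (rule convex_sum[OF _ assms(1)])
  show "finite I" using assms(3) sum.infinite by fastforce
  show "(\<Sum>i\<in>I. w i / sum w I) = 1" using assms(3) by (simp flip: sum_divide_distrib)
qed (use assms in auto)

lemma convex_on_weighted_mean:
  assumes "convex_on C g" "\<And>i. i \<in> I \<Longrightarrow> 0 \<le> w i" "0 < sum w I" "\<And>i. i \<in> I \<Longrightarrow> z i \<in> C"
  shows "g (weighted_mean w I z) \<le> (\<Sum>i\<in>I. w i * g (z i)) / sum w I"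
proof -
  have "finite I" "I \<noteq> {}" using assms(3) sum.infinite by fastforce+
  have "g (weighted_mean w I z) \<le> (\<Sum>i\<in>I. (w i / sum w I) * g (z i))"
    unfolding weighted_mean_normalized
    using assms \<open>finite I\<close> \<open>I \<noteq> {}\<close>
    by (intro convex_on_sum[OF _ _ assms(1)]) (auto simp flip: sum_divide_distrib)
  then show ?thesis by (simp add: sum_divide_distrib)
qed

lemma convex_on_lagr_primal:
  assumes "convex_on UNIV f"
  shows "convex_on UNIV (\<lambda>y. lagr f A b y l)"
proof -
  have "convex_on UNIV (\<lambda>y. l \<bullet> (A *v y - b))"
    by (rule convex_onI)
      (simp_all add: matrix_vector_right_distrib matrix_vector_mult_scaleR inner_diff_right algebra_simps)
  then show ?thesis unfolding lagr_def using assms by (rule convex_on_add[rotated])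
qed

lemma lagr_weighted_mean_dual:
  assumes "sum w I \<noteq> 0"
  shows "lagr f A b y (weighted_mean w I l) = (\<Sum>i\<in>I. w i * lagr f A b y (l i)) / sum w I"
proof -
  have "(\<Sum>i\<in>I. w i * f y) / sum w I = f y"
    using assms by (simp flip: sum_distrib_right)
  then show ?thesis
    by (simp add: lagr_def weighted_mean_normalized inner_sum_left distrib_left sum.distrib
        add_divide_distrib sum_divide_distrib)
qed

lemma balm_ergodic_gap:
  assumes f: "convex_on UNIV f"
    and D: "convex D" "convex_on D h"
    and grad: "\<And>l. l \<in> D \<Longrightarrow> (h has_derivative (\<lambda>v. gh l \<bullet> v)) (at l within D)"
    and "lam 0 \<in> D" and eta: "\<And>k. 0 < eta k"
    and balm: "\<And>k. saddle_point (\<lambda>y l. lagr f A b y l - bregman h gh l (lam k) / eta k)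
                 X D (x (Suc k)) (lam (Suc k))"
    and "0 < T" "y \<in> X" "l \<in> D"
  shows "lagr f A b (weighted_mean eta {..<T} (\<lambda>k. x (Suc k))) l
           - lagr f A b y (weighted_mean eta {..<T} (\<lambda>k. lam (Suc k)))
         \<le> bregman h gh l (lam 0) / sum eta {..<T}"
proof -
  let ?S = "sum eta {..<T}"
  let ?gap = "\<lambda>k. lagr f A b (x (Suc k)) l - lagr f A b y (lam (Suc k))"
  have lam: "lam k \<in> D" for k
    using \<open>lam 0 \<in> D\<close> balm[of "k - 1"] by (cases k) (auto simp: saddle_point_def)
  have "0 < ?S" using \<open>0 < T\<close> eta by (intro sum_pos) auto
  have "(\<Sum>k<T. eta k * ?gap k) \<le> (\<Sum>k<T. bregman h gh l (lam k) - bregman h gh l (lam (Suc k)))"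
    using bregman_saddle_step[OF D grad lam eta balm \<open>y \<in> X\<close> \<open>l \<in> D\<close>] by (intro sum_mono)
  also have "\<dots> = bregman h gh l (lam 0) - bregman h gh l (lam T)"
    by (rule sum_lessThan_telescope')
  also have "\<dots> \<le> bregman h gh l (lam 0)"
    using bregman_nonneg[where gh = gh, OF D(2) \<open>l \<in> D\<close> lam grad[OF lam]] by simp
  finally have regret: "(\<Sum>k<T. eta k * ?gap k) \<le> bregman h gh l (lam 0)" .
  have "lagr f A b (weighted_mean eta {..<T} (\<lambda>k. x (Suc k))) l
      \<le> (\<Sum>k<T. eta k * lagr f A b (x (Suc k)) l) / ?S"
    using eta \<open>0 < ?S\<close>
    by (intro convex_on_weighted_mean[OF convex_on_lagr_primal[OF f]]) (auto intro: less_imp_le)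
  moreover have "lagr f A b y (weighted_mean eta {..<T} (\<lambda>k. lam (Suc k)))
      = (\<Sum>k<T. eta k * lagr f A b y (lam (Suc k))) / ?S"
    using \<open>0 < ?S\<close> by (simp add: lagr_weighted_mean_dual)
  ultimately have "lagr f A b (weighted_mean eta {..<T} (\<lambda>k. x (Suc k))) l
        - lagr f A b y (weighted_mean eta {..<T} (\<lambda>k. lam (Suc k)))
      \<le> (\<Sum>k<T. eta k * ?gap k) / ?S"
    by (simp add: right_diff_distrib sum_subtractf diff_divide_distrib)
  also have "\<dots> \<le> bregman h gh l (lam 0) / ?S"
    using regret \<open>0 < ?S\<close> by (simp add: divide_right_mono)
  finally show ?thesis .
qed

theorem lemma3:
  fixes f :: "real^'n \<Rightarrow> real" and X :: "(real^'n) set"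
    and A :: "real^'n^'m" and b :: "real^'m"
    and h :: "real^'m \<Rightarrow> real" and gh :: "real^'m \<Rightarrow> real^'m"
    and eqc :: bool
    and x :: "nat \<Rightarrow> real^'n" and lam :: "nat \<Rightarrow> real^'m" and eta :: "nat \<Rightarrow> real"
  assumes f_convex: "convex_on UNIV f" and f_closed: "closed_fun f"
    and f_coercive: "coercive_on UNIV f"
    and X_closed: "closed X" and X_convex: "convex X"
    and h_coercive: "coercive_on (dual_dom eqc) h"
    and h_strict: "strict_convex_on_set (dual_dom eqc) h"
    and h_grad: "\<And>l. l \<in> dual_dom eqc \<Longrightarrow>
                   (h has_derivative (\<lambda>v. gh l \<bullet> v)) (at l within dual_dom eqc)"
    and gh_cont: "continuous_on (dual_dom eqc) gh"
    and lam0: "lam 0 \<in> dual_dom eqc"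
    and eta_pos: "\<And>k. eta k > 0"
    and balm: "\<And>k. saddle_point
                 (\<lambda>y l. lagr f A b y l - bregman h gh l (lam k) / eta k)
                 X (dual_dom eqc) (x (Suc k)) (lam (Suc k))"
    and T: "T \<ge> 1"
  shows "(\<forall>y\<in>X. \<forall>l\<in>dual_dom eqc.
            lagr f A b ((\<Sum>k<T. eta k *\<^sub>R x (Suc k)) /\<^sub>R (\<Sum>k<T. eta k)) l
            - lagr f A b y ((\<Sum>k<T. eta k *\<^sub>R lam (Suc k)) /\<^sub>R (\<Sum>k<T. eta k))
          \<le> bregman h gh l (lam 0) / (\<Sum>k<T. eta k))
       \<and> (\<forall>xs. xs \<in> X \<and> feasible eqc A b xs \<and>
               (\<forall>y\<in>X. feasible eqc A b y \<longrightarrow> f xs \<le> f y) \<longrightarrow>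
            (\<forall>l\<in>dual_dom eqc.
               f ((\<Sum>k<T. eta k *\<^sub>R x (Suc k)) /\<^sub>R (\<Sum>k<T. eta k)) - f xs
               + l \<bullet> (A *v ((\<Sum>k<T. eta k *\<^sub>R x (Suc k)) /\<^sub>R (\<Sum>k<T. eta k)) - b)
             \<le> bregman h gh l (lam 0) / (\<Sum>k<T. eta k)))"
proof -
  \<comment> \<open>The closedness and coercivity hypotheses only guarantee that the saddle points exist;
      here they are given.\<close>
  let ?D = "dual_dom eqc :: (real^'m) set"
  let ?xt = "weighted_mean eta {..<T} (\<lambda>k. x (Suc k))"
  let ?lt = "weighted_mean eta {..<T} (\<lambda>k. lam (Suc k))"
  have h: "convex_on ?D h" by (rule strict_convex_on_set_imp_convex_on[OF h_strict])
  have D: "convex ?D" by (rule convex_on_imp_convex[OF h])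
  have gap: "lagr f A b ?xt l - lagr f A b y ?lt \<le> bregman h gh l (lam 0) / (\<Sum>k<T. eta k)"
    if "y \<in> X" "l \<in> ?D" for y l
    using balm_ergodic_gap[OF f_convex D h h_grad lam0 eta_pos balm] T that by simp
  have "0 < (\<Sum>k<T. eta k)" using T eta_pos by (intro sum_pos) (auto simp: lessThan_empty_iff)
  then have "?lt \<in> ?D"
    using eta_pos balm
    by (intro weighted_mean_in_convex[OF D]) (auto intro: less_imp_le simp: saddle_point_def)
  then have "f ?xt - f xs + l \<bullet> (A *v ?xt - b) \<le> lagr f A b ?xt l - lagr f A b xs ?lt"
    if "feasible eqc A b xs" for xs l
    using dual_dom_inner_residual_nonpos[OF _ that] by (simp add: lagr_def)
  with gap show ?thesis
    unfolding weighted_mean_def[symmetric] by (meson order_trans)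
qed

end
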